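(* Let $H_1,G_1,H_2,G_2,H_3$ be finite groups and $s_1:G_1\to H_1$, $t_1:G_1\to H_2$, $s_2:G_2\to H_2$, $t_2:G_2\to H_3$ group homomorphisms, viewed as orbifold maps $\bullet/H_1\xleftarrow{s_1}\bullet/G_1\xrightarrow{t_1}\bullet/H_2\xleftarrow{s_2}\bullet/G_2\xrightarrow{t_2}\bullet/H_3$. Let $\bullet/G_1\times_{\bullet/H_2}\bullet/G_2$ be the fiber product, i.e. the action groupoid $(G_1\times G_2)\ltimes H_2$ with action $(g_1,g_2)\cdot h=s_2(g_2)\,h\,t_1(g_1)^{-1}$, equipped with the maps $s_3$ to $\bullet/H_1$ induced by $(g_1,g_2)\mapsto s_1(g_1)$ and $t_3$ to $\bullet/H_3$ induced by $(g_1,g_2)\mapsto t_2(g_2)$. Then, as maps $H^*(\bullet/H_1;\mathbb{R})\to H^*(\bullet/H_3;\mathbb{R})$, $$(t_2)_*\circ s_2^*\circ (t_1)_*\circ s_1^*=(t_3)_*\circ s_3^*.$$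
   Context: For a finite group $K$, $\bullet/K$ denotes the orbifold given by the action groupoid $K\ltimes\{\mathrm{pt}\}$; its de Rham cohomology is $\mathbb{R}$ in degree $0$, and the integral over an orbifold $M/K$ (global quotient) of a $K$-invariant compactly supported form $\omega$ is $\frac{1}{|K|}\int_M\omega$, so $\int_{\bullet/K}1=1/|K|$; integrals over a finite disjoint union of such point orbifolds are sums. Pullback $f^*$ on cohomology is the usual one, and pushforward $f_*$ along a proper map $f:X\to Z$ of compact zero-dimensional orbifolds is defined by $\int_Z f_*(\alpha)\wedge\beta=\int_X\alpha\wedge f^*\beta$. *)

theory Defs
  imports "HOL-Algebra.Algebra"
begin

text \<open>Compact zero-dimensional global-quotient orbifolds A/K: a finite group K acting
  (via act) on a finite set A of points. Degree-0 forms on A/K are the K-invariant real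
  functions on A (taken extensional: 0 outside A); in dimension 0 all forms are closed and
  none are exact, so these are exactly the de Rham cohomology classes.\<close>

definition orb_forms :: "('k,'m) monoid_scheme \<Rightarrow> 'x set \<Rightarrow> ('k \<Rightarrow> 'x \<Rightarrow> 'x) \<Rightarrow> ('x \<Rightarrow> real) set" where
  "orb_forms K A act = {w. (\<forall>k\<in>carrier K. \<forall>x\<in>A. w (act k x) = w x) \<and> (\<forall>x. x \<notin> A \<longrightarrow> w x = 0)}"

definition orb_integral :: "('k,'m) monoid_scheme \<Rightarrow> 'x set \<Rightarrow> ('x \<Rightarrow> real) \<Rightarrow> real" where
  "orb_integral K A w = (\<Sum>x\<in>A. w x) / real (card (carrier K))"

text \<open>An orbifold map between action groupoids is a pair (group homomorphism, equivariant
  map on objects). On forms only the object map matters.\<close>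
definition orb_pullback :: "'x set \<Rightarrow> ('k \<Rightarrow> 'l) \<times> ('x \<Rightarrow> 'y) \<Rightarrow> ('y \<Rightarrow> real) \<Rightarrow> ('x \<Rightarrow> real)" where
  "orb_pullback A F \<beta> = (\<lambda>x. if x \<in> A then \<beta> (snd F x) else 0)"

definition orb_pushforward ::
  "('k,'m) monoid_scheme \<Rightarrow> 'x set \<Rightarrow> ('k \<Rightarrow> 'x \<Rightarrow> 'x) \<Rightarrow>
   ('l,'n) monoid_scheme \<Rightarrow> 'y set \<Rightarrow> ('l \<Rightarrow> 'y \<Rightarrow> 'y) \<Rightarrow>
   ('k \<Rightarrow> 'l) \<times> ('x \<Rightarrow> 'y) \<Rightarrow> ('x \<Rightarrow> real) \<Rightarrow> ('y \<Rightarrow> real)" where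
  "orb_pushforward K A act L B act' F \<alpha> =
     (THE \<gamma>. \<gamma> \<in> orb_forms L B act' \<and>
        (\<forall>\<beta>\<in>orb_forms L B act'.
           orb_integral L B (\<lambda>z. \<gamma> z * \<beta> z) = orb_integral K A (\<lambda>x. \<alpha> x * orb_pullback A F \<beta> x)))"

text \<open>The point orbifold \<bullet>/K: K acting trivially on a single point.\<close>
definition pt_act :: "'k \<Rightarrow> unit \<Rightarrow> unit" where
  "pt_act k x = x"

definition to_pt :: "('k \<Rightarrow> 'l) \<Rightarrow> ('k \<Rightarrow> 'l) \<times> ('x \<Rightarrow> unit)" where
  "to_pt \<phi> = (\<phi>, \<lambda>_. ())"

definition fp_act :: "('h,'m) monoid_scheme \<Rightarrow> ('g1 \<Rightarrow> 'h) \<Rightarrow> ('g2 \<Rightarrow> 'h) \<Rightarrow> 'g1 \<times> 'g2 \<Rightarrow> 'h \<Rightarrow> 'h" where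
  "fp_act H2 t1 s2 g h = s2 (snd g) \<otimes>\<^bsub>H2\<^esub> h \<otimes>\<^bsub>H2\<^esub> inv\<^bsub>H2\<^esub> (t1 (fst g))"

end

theory Submission
  imports Defs
begin

text \<open>Pushing a degree-0 class forward to a point orbifold \<bullet>/L integrates it and multiplies by
  the order of L, and pulling back along a map to a point orbifold gives a constant function.
  Both sides therefore send w to the constant |H2| |H3| w / (|G1| |G2|): on the left the factors
  arise one push-forward at a time, on the right the fiber product contributes |H2| points
  with isotropy group G1 \<times> G2.\<close>

lemma orb_forms_pt: "orb_forms L {()} pt_act = UNIV"
  by (auto simp: orb_forms_def pt_act_def)

lemma orb_pullback_to_pt: "orb_pullback A (to_pt \<phi>) w = (\<lambda>x. if x \<in> A then w () else 0)"
  by (auto simp: orb_pullback_def to_pt_def)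

lemma orb_pullback_pt_to_pt: "orb_pullback {()} (to_pt \<phi>) w = w"
  by (auto simp: orb_pullback_to_pt)

lemma orb_integral_pt: "orb_integral K {()} w = w () / real (card (carrier K))"
  by (simp add: orb_integral_def)

lemma orb_integral_pullback_to_pt:
  "orb_integral K A (orb_pullback A (to_pt \<phi>) w) = real (card A) * w () / real (card (carrier K))"
  by (simp add: orb_integral_def orb_pullback_to_pt)

lemma orb_pushforward_pt:
  assumes "monoid L" "finite (carrier L)"
  shows "orb_pushforward K A act L {()} pt_act F \<alpha> =
    (\<lambda>_. real (card (carrier L)) * orb_integral K A \<alpha>)"
  unfolding orb_pushforward_def orb_forms_pt
proof (rule the_equality)
  have card_L: "real (card (carrier L)) \<noteq> 0"
    using monoid.order_gt_0_iff_finite[OF assms(1)] assms(2)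
    by (auto simp: order_def monoid.one_closed)
  have pairing: "orb_integral K A (\<lambda>x. \<alpha> x * orb_pullback A F \<beta> x) = orb_integral K A \<alpha> * \<beta> ()"
    for \<beta>
    by (simp add: orb_integral_def orb_pullback_def sum_distrib_right)
  show "(\<lambda>_. real (card (carrier L)) * orb_integral K A \<alpha>) \<in> UNIV \<and>
      (\<forall>\<beta>\<in>UNIV. orb_integral L {()} (\<lambda>z. real (card (carrier L)) * orb_integral K A \<alpha> * \<beta> z) =
        orb_integral K A (\<lambda>x. \<alpha> x * orb_pullback A F \<beta> x))"
    using card_L by (simp add: pairing orb_integral_pt)
  fix \<gamma> :: "unit \<Rightarrow> real"
  assume dual: "\<gamma> \<in> UNIV \<and> (\<forall>\<beta>\<in>UNIV. orb_integral L {()} (\<lambda>z. \<gamma> z * \<beta> z) =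
      orb_integral K A (\<lambda>x. \<alpha> x * orb_pullback A F \<beta> x))"
  have "orb_integral L {()} (\<lambda>z. \<gamma> z * 1) = orb_integral K A (\<lambda>x. \<alpha> x * orb_pullback A F (\<lambda>_. 1) x)"
    by (rule bspec[OF conjunct2[OF dual] UNIV_I])
  then have "orb_integral L {()} \<gamma> = orb_integral K A \<alpha>"
    by (simp add: pairing)
  then have "\<gamma> () = real (card (carrier L)) * orb_integral K A \<alpha>"
    using card_L by (simp add: orb_integral_pt field_simps)
  then show "\<gamma> = (\<lambda>_. real (card (carrier L)) * orb_integral K A \<alpha>)"
    by (auto intro: ext)
qed

theorem proposition2p9:
  fixes H1 :: "'h1 monoid" and G1 :: "'g1 monoid" and H2 :: "'h2 monoid"
    and G2 :: "'g2 monoid" and H3 :: "'h3 monoid"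
    and s1 :: "'g1 \<Rightarrow> 'h1" and t1 :: "'g1 \<Rightarrow> 'h2"
    and s2 :: "'g2 \<Rightarrow> 'h2" and t2 :: "'g2 \<Rightarrow> 'h3"
  assumes "group H1" "group G1" "group H2" "group G2" "group H3"
    and "finite (carrier H1)" "finite (carrier G1)" "finite (carrier H2)"
    and "finite (carrier G2)" "finite (carrier H3)"
    and "s1 \<in> hom G1 H1" "t1 \<in> hom G1 H2" "s2 \<in> hom G2 H2" "t2 \<in> hom G2 H3"
  shows "\<forall>w\<in>orb_forms H1 {()} pt_act.
    orb_pushforward G2 {()} pt_act H3 {()} pt_act (to_pt t2)
      (orb_pullback {()} (to_pt s2)
        (orb_pushforward G1 {()} pt_act H2 {()} pt_act (to_pt t1)
          (orb_pullback {()} (to_pt s1) w)))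
    = orb_pushforward (G1 \<times>\<times> G2) (carrier H2) (fp_act H2 t1 s2) H3 {()} pt_act
        (to_pt (\<lambda>g::'g1 \<times> 'g2. t2 (snd g)))
        (orb_pullback (carrier H2) (to_pt (\<lambda>g::'g1 \<times> 'g2. s1 (fst g))) w)"
proof
  fix w :: "unit \<Rightarrow> real"
  have push_H2: "orb_pushforward K A act H2 {()} pt_act F \<alpha> =
      (\<lambda>_. real (card (carrier H2)) * orb_integral K A \<alpha>)" for K :: "'k monoid" and A act F \<alpha>
    using assms(3,8) by (simp add: orb_pushforward_pt group.is_monoid)
  have push_H3: "orb_pushforward K A act H3 {()} pt_act F \<alpha> =
      (\<lambda>_. real (card (carrier H3)) * orb_integral K A \<alpha>)" for K :: "'k monoid" and A act F \<alpha>
    using assms(5,10) by (simp add: orb_pushforward_pt group.is_monoid)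
  show "orb_pushforward G2 {()} pt_act H3 {()} pt_act (to_pt t2)
      (orb_pullback {()} (to_pt s2)
        (orb_pushforward G1 {()} pt_act H2 {()} pt_act (to_pt t1)
          (orb_pullback {()} (to_pt s1) w)))
    = orb_pushforward (G1 \<times>\<times> G2) (carrier H2) (fp_act H2 t1 s2) H3 {()} pt_act
        (to_pt (\<lambda>g::'g1 \<times> 'g2. t2 (snd g)))
        (orb_pullback (carrier H2) (to_pt (\<lambda>g::'g1 \<times> 'g2. s1 (fst g))) w)"
    by (simp add: push_H2 push_H3 orb_pullback_pt_to_pt orb_integral_pullback_to_pt
        orb_integral_pt card_cartesian_product)
qed

end
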